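(* If $r\ge 2$, then the glued binary tree $GT(r)$ satisfies $\mu_{\rm o}(GT(r))=2^r$, and $GT(r)$ has exactly one $\mu_{\rm o}$-set.
   Context: A perfect binary tree of depth $r\ge1$ is a rooted tree in which every non-leaf vertex has exactly $2$ children and all leaves have depth $r$. The glued binary tree $GT(r)$ is obtained from two copies of the perfect binary tree of depth $r$ by pairwise identifying their leaves (via a fixed isomorphism of the copies). For $S\subseteq V(G)$, two vertices $u,v$ are $S$-visible if there exists a shortest $u,v$-path $P$ with $V(P)\cap S\subseteq\{u,v\}$; $S$ is a mutual-visibility set if every two vertices of $S$ are $S$-visible. $S$ is an outer mutual-visibility set if it is a mutual-visibility set and every pair $u\in S$, $v\in V(G)\setminus S$ is $S$-visible. A largest outer mutual-visibility set is a $\mu_{\rm o}$-set, and its size is the outer mutual-visibility number $\mu_{\rm o}(G)$. *)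

theory Defs
  imports Main
begin

definition walk :: "'a set \<Rightarrow> ('a \<Rightarrow> 'a \<Rightarrow> bool) \<Rightarrow> 'a list \<Rightarrow> bool" where
  "walk V E p \<longleftrightarrow> p \<noteq> [] \<and> set p \<subseteq> V \<and> (\<forall>i. Suc i < length p \<longrightarrow> E (p ! i) (p ! Suc i))"

definition dist :: "'a set \<Rightarrow> ('a \<Rightarrow> 'a \<Rightarrow> bool) \<Rightarrow> 'a \<Rightarrow> 'a \<Rightarrow> nat" where
  "dist V E u v = (LEAST n. \<exists>p. walk V E p \<and> hd p = u \<and> last p = v \<and> length p = Suc n)"

text \<open>A shortest u,v-path (as vertex list); minimality forces it to be a path.\<close>
definition shortest_path :: "'a set \<Rightarrow> ('a \<Rightarrow> 'a \<Rightarrow> bool) \<Rightarrow> 'a \<Rightarrow> 'a \<Rightarrow> 'a list \<Rightarrow> bool" where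
  "shortest_path V E u v p \<longleftrightarrow> walk V E p \<and> hd p = u \<and> last p = v \<and> length p = Suc (dist V E u v)"

definition S_visible :: "'a set \<Rightarrow> ('a \<Rightarrow> 'a \<Rightarrow> bool) \<Rightarrow> 'a set \<Rightarrow> 'a \<Rightarrow> 'a \<Rightarrow> bool" where
  "S_visible V E S u v \<longleftrightarrow> (\<exists>p. shortest_path V E u v p \<and> set p \<inter> S \<subseteq> {u, v})"

definition mutual_visibility_set :: "'a set \<Rightarrow> ('a \<Rightarrow> 'a \<Rightarrow> bool) \<Rightarrow> 'a set \<Rightarrow> bool" where
  "mutual_visibility_set V E S \<longleftrightarrow> S \<subseteq> V \<and> (\<forall>u\<in>S. \<forall>v\<in>S. S_visible V E S u v)"

definition outer_mutual_visibility_set :: "'a set \<Rightarrow> ('a \<Rightarrow> 'a \<Rightarrow> bool) \<Rightarrow> 'a set \<Rightarrow> bool" where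
  "outer_mutual_visibility_set V E S \<longleftrightarrow> mutual_visibility_set V E S \<and>
     (\<forall>u\<in>S. \<forall>v\<in>V - S. S_visible V E S u v)"

definition outer_mv_number :: "'a set \<Rightarrow> ('a \<Rightarrow> 'a \<Rightarrow> bool) \<Rightarrow> nat" where
  "outer_mv_number V E = Max (card ` {S. outer_mutual_visibility_set V E S})"

definition mu_o_set :: "'a set \<Rightarrow> ('a \<Rightarrow> 'a \<Rightarrow> bool) \<Rightarrow> 'a set \<Rightarrow> bool" where
  "mu_o_set V E S \<longleftrightarrow> outer_mutual_visibility_set V E S \<and> card S = outer_mv_number V E"

text \<open>A vertex of a perfect binary tree of depth r is a bit list of length \<le> r
  (its path from the root; the root is []); the parent of xs is butlast xs.
  In GT(r) a vertex is (copy, xs). Internal vertices (length xs < r) exist in both copies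
  (copy = False / True); leaves (length xs = r) are identified and represented with copy = False.\<close>
definition GT_V :: "nat \<Rightarrow> (bool \<times> bool list) set" where
  "GT_V r = {(c, xs). length xs < r} \<union> {(c, xs). c = False \<and> length xs = r}"

definition tree_edge :: "bool list \<Rightarrow> bool list \<Rightarrow> bool" where
  "tree_edge xs ys \<longleftrightarrow> (length ys = Suc (length xs) \<and> butlast ys = xs)
                      \<or> (length xs = Suc (length ys) \<and> butlast xs = ys)"

definition GT_E :: "nat \<Rightarrow> bool \<times> bool list \<Rightarrow> bool \<times> bool list \<Rightarrow> bool" where
  "GT_E r u v \<longleftrightarrow> u \<in> GT_V r \<and> v \<in> GT_V r \<and> tree_edge (snd u) (snd v) \<and>
     (fst u = fst v \<or> length (snd u) = r \<or> length (snd v) = r)"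

end

theory Submission
  imports Defs "HOL-Library.Sublist"
begin

text \<open>
  A vertex of \<open>GT(r)\<close> is a copy bit \<open>c\<close> with a tree address \<open>xs\<close>. Along a walk the depth
  \<open>length xs\<close> changes by one per step, and the copy can only change at a leaf; hence shortest
  paths are tree geodesics through the longest common prefix of the addresses, or detours
  through a leaf.

  Upper bound: \<open>canonical_leaf\<close> sends \<open>(c, xs)\<close> to the leaf reached from \<open>xs\<close> by always
  descending to the child \<open>c\<close>. It is injective on an outer mutual-visibility set \<open>S\<close>: if two
  vertices of \<open>S\<close> had the same image, the deeper one would lie below the other one in its
  copy, and the upper one would block every shortest path from the lower one to a neighbour of
  the upper one pointing away from it. The leaves attain the bound, since a geodesic from a leaf
  climbs to the common ancestor and descends again, meeting no other leaf.

  Uniqueness: if \<open>card S = 2 ^ r\<close>, \<open>canonical_leaf\<close> maps \<open>S\<close> onto the leaves. For \<open>(c, xs) \<in> S\<close>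
  of depth below \<open>r - 1\<close>, the leaf \<open>xs @ [\<not> c, c, \<dots>, c]\<close> could only come from a vertex below
  \<open>(c, xs)\<close>. At depth \<open>r - 1\<close>, the leaf \<open>xs @ [\<not> c]\<close> comes from some \<open>(\<not> c, ys)\<close> with \<open>ys\<close> a
  prefix of \<open>xs\<close>; \<open>ys\<close> is not the root by the first case, and otherwise \<open>(\<not> c, ys)\<close> blocks
  the shortest paths from \<open>(c, xs)\<close> to the parent of \<open>ys\<close>, which go down to a leaf below \<open>xs\<close>
  and climb in the other copy. So \<open>S\<close> consists of leaves only.
\<close>

section \<open>Walks and visibility in a graph\<close>

lemma walk_singleton_iff [simp]: "walk V E [x] \<longleftrightarrow> x \<in> V"
  by (auto simp: walk_def)

lemma walk_nonempty: "walk V E p \<Longrightarrow> p \<noteq> []"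
  by (simp add: walk_def)

lemma walk_nth_edge: "walk V E p \<Longrightarrow> Suc i < length p \<Longrightarrow> E (p ! i) (p ! Suc i)"
  by (simp add: walk_def)

lemma walk_hd_conv_nth: "walk V E p \<Longrightarrow> hd p = p ! 0"
  by (simp add: walk_def hd_conv_nth)

lemma walk_last_conv_nth: "walk V E p \<Longrightarrow> last p = p ! (length p - 1)"
  by (simp add: walk_def last_conv_nth)

lemma walk_Cons_iff:
  assumes "q \<noteq> []"
  shows "walk V E (x # q) \<longleftrightarrow> x \<in> V \<and> E x (hd q) \<and> walk V E q"
  using assms
  by (auto simp: walk_def hd_conv_nth nth_Cons split: nat.splits)

lemma walk_append_iff:
  assumes "p \<noteq> []" "q \<noteq> []"
  shows "walk V E (p @ q) \<longleftrightarrow> walk V E p \<and> walk V E q \<and> E (last p) (hd q)"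
  using assms(1)
proof (induction p)
  case (Cons x p)
  then show ?case
    using assms(2) walk_Cons_iff[of q V E x] walk_Cons_iff[of "p @ q" V E x]
      walk_Cons_iff[of p V E x]
    by (cases "p = []") auto
qed simp

lemma walk_rev:
  assumes "\<And>a b. E a b \<Longrightarrow> E b a" "walk V E p"
  shows "walk V E (rev p)"
  using assms(2)
proof (induction p)
  case (Cons x p)
  show ?case
  proof (cases "p = []")
    case False
    with Cons.prems have "walk V E p" "x \<in> V" "E x (hd p)"
      by (auto simp: walk_Cons_iff)
    with Cons.IH False show ?thesis
      using walk_append_iff[of "rev p" "[x]" V E] assms(1) by (simp add: last_rev)
  qed (use Cons in simp)
qed (simp add: walk_def)

lemma walk_join:
  assumes "walk V E p" "walk V E q" "last p = hd q"
  shows "walk V E (p @ tl q)"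
proof (cases "tl q = []")
  case False
  then have "q = hd q # tl q" "walk V E (tl q)" "E (hd q) (hd (tl q))"
    using assms(2) walk_Cons_iff[OF False] by (metis list.collapse list.sel(2))+
  then show ?thesis
    using assms walk_append_iff[OF walk_nonempty[OF assms(1)] False] by simp
qed (use assms in simp)

lemma last_append_tl: "p \<noteq> [] \<Longrightarrow> q \<noteq> [] \<Longrightarrow> last p = hd q \<Longrightarrow> last (p @ tl q) = last q"
  by (cases q) auto

lemma walk_drop: "walk V E p \<Longrightarrow> k < length p \<Longrightarrow> walk V E (drop k p)"
  by (auto simp: walk_def dest: in_set_dropD)

lemma dist_less_length_walk:
  assumes "walk V E p" "hd p = u" "last p = v"
  shows "dist V E u v < length p"
proof -
  have "length p = Suc (length p - 1)"
    using walk_nonempty[OF assms(1)] by simp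
  then have "dist V E u v \<le> length p - 1"
    unfolding dist_def using assms by (intro Least_le) blast
  moreover have "0 < length p"
    using walk_nonempty[OF assms(1)] by simp
  ultimately show ?thesis
    by linarith
qed

lemma S_visibleI:
  assumes "walk V E p" "hd p = u" "last p = v" "set p \<inter> S \<subseteq> {u, v}"
    and "\<And>q. walk V E q \<Longrightarrow> hd q = u \<Longrightarrow> last q = v \<Longrightarrow> length p \<le> length q"
  shows "S_visible V E S u v"
proof -
  have "dist V E u v = length p - 1"
    unfolding dist_def
  proof (rule Least_equality)
    show "\<exists>q. walk V E q \<and> hd q = u \<and> last q = v \<and> length q = Suc (length p - 1)"
      using assms walk_nonempty[OF assms(1)] by auto
  qed (use assms(5) in fastforce)
  then show ?thesis
    unfolding S_visible_def shortest_path_def using assms walk_nonempty[OF assms(1)] by auto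
qed

lemma S_visible_blocked:
  assumes "S_visible V E S u v" "w \<in> S" "w \<notin> {u, v}"
    and "walk V E q" "hd q = u" "last q = v"
    and "\<And>p. walk V E p \<Longrightarrow> hd p = u \<Longrightarrow> last p = v \<Longrightarrow> length p \<le> length q \<Longrightarrow> w \<in> set p"
  shows False
proof -
  obtain p where p: "shortest_path V E u v p" "set p \<inter> S \<subseteq> {u, v}"
    using assms(1) unfolding S_visible_def by blast
  then have "length p \<le> length q"
    using dist_less_length_walk[OF assms(4-6)] unfolding shortest_path_def by simp
  then have "w \<in> set p"
    using assms(7) p(1) unfolding shortest_path_def by blast
  then show False
    using p(2) assms(2,3) by blast
qed

lemma outer_mv_subset: "outer_mutual_visibility_set V E S \<Longrightarrow> S \<subseteq> V"
  by (simp add: outer_mutual_visibility_set_def mutual_visibility_set_def)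

lemma outer_mv_visible:
  "outer_mutual_visibility_set V E S \<Longrightarrow> u \<in> S \<Longrightarrow> v \<in> V \<Longrightarrow> S_visible V E S u v"
  unfolding outer_mutual_visibility_set_def mutual_visibility_set_def by blast

section \<open>Walks in the glued binary tree\<close>

abbreviation GT_walk :: "nat \<Rightarrow> (bool \<times> bool list) list \<Rightarrow> bool" where
  "GT_walk r \<equiv> walk (GT_V r) (GT_E r)"

lemma GT_V_iff [simp]: "(c, xs) \<in> GT_V r \<longleftrightarrow> length xs < r \<or> \<not> c \<and> length xs = r"
  by (auto simp: GT_V_def)

lemma GT_V_depth_le: "v \<in> GT_V r \<Longrightarrow> length (snd v) \<le> r"
  by (cases v) auto

lemma finite_GT_V: "finite (GT_V r)"
proof (rule finite_subset)
  show "GT_V r \<subseteq> UNIV \<times> {xs. set xs \<subseteq> UNIV \<and> length xs \<le> r}"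
    by (auto simp: GT_V_def)
qed (use finite_lists_length_le[of "UNIV :: bool set" r] in simp)

lemma GT_E_sym: "GT_E r u v \<Longrightarrow> GT_E r v u"
  by (auto simp: GT_E_def tree_edge_def)

lemma GT_E_tree_edge: "GT_E r u v \<Longrightarrow> tree_edge (snd u) (snd v)"
  by (simp add: GT_E_def)

lemma GT_E_same_copy:
  "GT_E r u v \<Longrightarrow> length (snd u) < r \<Longrightarrow> length (snd v) < r \<Longrightarrow> fst u = fst v"
  by (auto simp: GT_E_def)

lemma GT_E_parent:
  assumes "(c', ys @ [b]) \<in> GT_V r" "c' = c \<or> length ys = r - 1"
  shows "GT_E r (c', ys @ [b]) (c, ys)"
  using assms by (auto simp: GT_E_def tree_edge_def)

lemma GT_walk_depth_lipschitz:
  assumes "GT_walk r p" "i \<le> j" "j < length p"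
  shows "length (snd (p ! j)) \<le> length (snd (p ! i)) + (j - i)
    \<and> length (snd (p ! i)) \<le> length (snd (p ! j)) + (j - i)"
  using assms(2,3)
proof (induction j)
  case (Suc j)
  show ?case
  proof (cases "i = Suc j")
    case False
    then have "i \<le> j"
      using Suc.prems by simp
    moreover have "tree_edge (snd (p ! j)) (snd (p ! Suc j))"
      using GT_E_tree_edge walk_nth_edge[OF assms(1) Suc.prems(2)] by blast
    ultimately show ?thesis
      using Suc by (auto simp: tree_edge_def)
  qed simp
qed simp

lemma GT_walk_exits_subtree:
  assumes "GT_walk r p" "prefix w (snd (hd p))" "\<not> prefix w (snd (last p))"
  obtains k where "Suc k < length p" "snd (p ! k) = w" "snd (p ! Suc k) = butlast w"
proof -
  let ?P = "\<lambda>i. \<not> prefix w (snd (p ! i))"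
  have "?P (length p - 1)" "\<not> ?P 0"
    using assms by (simp_all add: walk_hd_conv_nth walk_last_conv_nth)
  then obtain k where k: "k < length p - 1" "prefix w (snd (p ! k))" "\<not> prefix w (snd (p ! Suc k))"
    using ex_least_nat_less[of ?P] by blast
  then have "Suc k < length p"
    by linarith
  then have "tree_edge (snd (p ! k)) (snd (p ! Suc k))"
    using GT_E_tree_edge walk_nth_edge[OF assms(1)] by blast
  with k have "snd (p ! Suc k) = butlast (snd (p ! k))" "snd (p ! k) \<noteq> []"
    unfolding tree_edge_def by (metis append_butlast_last_id length_greater_0_conv prefix_snoc
        zero_less_Suc)+
  with k have "snd (p ! k) = w"
    by (metis append_butlast_last_id prefix_snoc)
  with k \<open>Suc k < length p\<close> \<open>snd (p ! Suc k) = butlast (snd (p ! k))\<close> show thesis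
    using that by simp
qed

lemma longest_common_prefix_eq_left: "prefix us vs \<Longrightarrow> longest_common_prefix us vs = us"
  by (metis longest_common_prefix_max_prefix longest_common_prefix_prefix1 prefix_order.antisym
      prefix_order.refl)

lemma longest_common_prefix_eq_right: "prefix vs us \<Longrightarrow> longest_common_prefix us vs = vs"
  by (metis longest_common_prefix_max_prefix longest_common_prefix_prefix2 prefix_order.antisym
      prefix_order.refl)

lemma longest_common_prefix_length_less:
  assumes "\<not> prefix us vs"
  shows "length (longest_common_prefix us vs) < length us"
proof -
  have "strict_prefix (longest_common_prefix us vs) us"
    using assms longest_common_prefix_prefix1[of us vs] longest_common_prefix_prefix2[of us vs]
    by (metis prefix_order.dual_order.not_eq_order_implies_strict)
  then show ?thesis
    by (rule prefix_length_less)
qed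

lemma GT_walk_through_lcp:
  assumes "GT_walk r p" "snd (hd p) = us" "snd (last p) = vs" "\<not> prefix us vs"
  defines "a \<equiv> longest_common_prefix us vs"
  obtains k where "Suc k < length p" "snd (p ! k) = take (Suc (length a)) us" "snd (p ! Suc k) = a"
    "length us \<le> Suc (length a) + k" "length vs + Suc k \<le> length a + (length p - 1)"
proof -
  define w where "w = take (Suc (length a)) us"
  have "prefix a us"
    unfolding a_def by (rule longest_common_prefix_prefix1)
  moreover have "length a < length us"
    unfolding a_def using assms(4) by (rule longest_common_prefix_length_less)
  ultimately have "butlast w = a" "length w = Suc (length a)"
    unfolding w_def by (auto simp: butlast_take prefix_def)
  have "\<not> prefix w vs"
  proof
    assume "prefix w vs"
    then have "prefix w a"
      unfolding a_def w_def by (simp add: longest_common_prefix_max_prefix take_is_prefix)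
    then show False
      using prefix_length_le \<open>length w = Suc (length a)\<close> by fastforce
  qed
  moreover have "prefix w (snd (hd p))"
    unfolding w_def assms(2) by (rule take_is_prefix)
  ultimately obtain k where k: "Suc k < length p" "snd (p ! k) = w" "snd (p ! Suc k) = a"
    using GT_walk_exits_subtree[OF assms(1), of w] assms(3) \<open>butlast w = a\<close> by metis
  have "length us \<le> length w + k"
    using GT_walk_depth_lipschitz[OF assms(1), of 0 k] k(1,2) assms(2) walk_hd_conv_nth[OF assms(1)]
    by simp
  moreover have "length vs \<le> length a + (length p - 1 - Suc k)"
    using GT_walk_depth_lipschitz[OF assms(1), of "Suc k" "length p - 1"] k(1,3) assms(3)
      walk_last_conv_nth[OF assms(1)] by simp
  ultimately show thesis
    using that k \<open>length w = Suc (length a)\<close> unfolding w_def by simp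
qed

lemma GT_walk_length_ge_lcp:
  assumes "GT_walk r p" "snd (hd p) = us" "snd (last p) = vs"
  shows "length us + length vs \<le> 2 * length (longest_common_prefix us vs) + (length p - 1)"
proof (cases "prefix us vs")
  case True
  have "length vs \<le> length us + (length p - 1)"
    using GT_walk_depth_lipschitz[OF assms(1), of 0 "length p - 1"] walk_nonempty[OF assms(1)]
      assms(2,3) walk_hd_conv_nth[OF assms(1)] walk_last_conv_nth[OF assms(1)] by simp
  then show ?thesis
    using True by (simp add: longest_common_prefix_eq_left)
next
  case False
  then obtain k where "length us \<le> Suc (length (longest_common_prefix us vs)) + k"
    "length vs + Suc k \<le> length (longest_common_prefix us vs) + (length p - 1)"
    using GT_walk_through_lcp[OF assms] by blast
  then show ?thesis
    by linarith
qed

lemma GT_shortest_walk_through_lcp: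
  assumes "GT_walk r p" "snd (hd p) = us" "snd (last p) = vs" "\<not> prefix us vs"
  defines "a \<equiv> longest_common_prefix us vs"
  assumes "2 * length a + (length p - 1) \<le> length us + length vs"
  shows "snd (p ! (length us - Suc (length a))) = take (Suc (length a)) us"
    and "snd (p ! (length us - length a)) = a"
proof -
  obtain k where k: "Suc k < length p" "snd (p ! k) = take (Suc (length a)) us"
    "snd (p ! Suc k) = a" "length us \<le> Suc (length a) + k"
    "length vs + Suc k \<le> length a + (length p - 1)"
    using GT_walk_through_lcp[OF assms(1-4)] unfolding a_def by blast
  then have "k = length us - Suc (length a)" "Suc k = length us - length a"
    using assms(6) by linarith+
  then show "snd (p ! (length us - Suc (length a))) = take (Suc (length a)) us"
    and "snd (p ! (length us - length a)) = a"
    using k by metis+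
qed

lemma GT_internal_walk_same_copy:
  assumes "GT_walk r p" "\<forall>v \<in> set p. length (snd v) < r"
  shows "fst (last p) = fst (hd p)"
  using assms
proof (induction p)
  case (Cons x p)
  show ?case
  proof (cases "p = []")
    case False
    with Cons.prems have "GT_walk r p" "GT_E r x (hd p)"
      by (simp_all add: walk_Cons_iff)
    with Cons False show ?thesis
      using GT_E_same_copy[of r x "hd p"] by simp
  qed simp
qed (simp add: walk_def)

lemma GT_walk_between_copies_visits_leaf:
  assumes "GT_walk r p" "fst (last p) \<noteq> fst (hd p)"
  obtains k where "k < length p" "length (snd (p ! k)) = r"
proof -
  obtain v where "v \<in> set p" "\<not> length (snd v) < r"
    using GT_internal_walk_same_copy[OF assms(1)] assms(2) by blast
  moreover have "set p \<subseteq> GT_V r"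
    using assms(1) by (simp add: walk_def)
  ultimately show thesis
    using that GT_V_depth_le by (metis in_set_conv_nth le_neq_implies_less subsetD)
qed

lemma GT_climb_walk:
  assumes "(c, ys) \<in> GT_V r" "j \<le> length ys"
  obtains p where "GT_walk r p" "hd p = (c, ys)" "last p = (c, take j ys)"
    "length p = Suc (length ys - j)" "\<forall>v \<in> set (tl p). length (snd v) < length ys"
proof -
  have "\<exists>p. GT_walk r p \<and> hd p = (c, ys) \<and> last p = (c, take j ys)
    \<and> length p = Suc (length ys - j) \<and> (\<forall>v \<in> set (tl p). length (snd v) < length ys)"
    using assms
  proof (induction ys arbitrary: j rule: rev_induct)
    case (snoc b ys)
    show ?case
    proof (cases "j = Suc (length ys)")
      case True
      then show ?thesis
        using snoc.prems by (intro exI[of _ "[(c, ys @ [b])]"]) auto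
    next
      case False
      with snoc.prems have "(c, ys) \<in> GT_V r" "j \<le> length ys"
        by auto
      then obtain p where p: "GT_walk r p" "hd p = (c, ys)" "last p = (c, take j ys)"
        "length p = Suc (length ys - j)" "\<forall>v \<in> set (tl p). length (snd v) < length ys"
        using snoc.IH by blast
      have "p \<noteq> []"
        using walk_nonempty[OF p(1)] .
      then have "set p = insert (c, ys) (set (tl p))"
        using p(2) by (metis list.collapse list.simps(15))
      moreover have "GT_walk r ((c, ys @ [b]) # p)"
        using walk_Cons_iff[OF \<open>p \<noteq> []\<close>] p(1,2) GT_E_parent[OF snoc.prems(1)] snoc.prems(1)
        by simp
      ultimately show ?thesis
        using p \<open>p \<noteq> []\<close> \<open>j \<le> length ys\<close>
        by (intro exI[of _ "(c, ys @ [b]) # p"]) auto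
    qed
  qed (auto intro!: exI[of _ "[(c, [])]"])
  then show thesis
    using that by blast
qed

lemma GT_leaf_climb_walk:
  assumes "length ys = r" "j < r"
  obtains p where "GT_walk r p" "hd p = (False, ys)" "last p = (c, take j ys)"
    "length p = Suc (r - j)" "\<forall>v \<in> set (tl p). length (snd v) < r"
proof -
  obtain ys' b where ys: "ys = ys' @ [b]"
    using assms by (metis length_0_conv less_zeroE rev_exhaust)
  with assms have "(c, ys') \<in> GT_V r" "j \<le> length ys'"
    by auto
  then obtain p where p: "GT_walk r p" "hd p = (c, ys')" "last p = (c, take j ys')"
    "length p = Suc (length ys' - j)" "\<forall>v \<in> set (tl p). length (snd v) < length ys'"
    by (rule GT_climb_walk)
  have "p \<noteq> []"
    using walk_nonempty[OF p(1)] .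
  have "GT_E r (False, ys) (c, ys')"
    unfolding ys by (rule GT_E_parent) (use assms ys in auto)
  then have "GT_walk r ((False, ys) # p)"
    using walk_Cons_iff[OF \<open>p \<noteq> []\<close>] p(1,2) assms by simp
  moreover have "set p = insert (c, ys') (set (tl p))"
    using p(2) \<open>p \<noteq> []\<close> by (metis list.collapse list.simps(15))
  then have "\<forall>v \<in> set p. length (snd v) < r"
    using p(5) assms ys by auto
  moreover have "length ((False, ys) # p) = Suc (r - j)"
    using p(4) \<open>j \<le> length ys'\<close> assms ys by simp
  moreover have "take j ys' = take j ys"
    using \<open>j \<le> length ys'\<close> ys by simp
  ultimately show thesis
    using that[of "(False, ys) # p"] p(3) \<open>p \<noteq> []\<close> by simp
qed

lemma GT_ancestor_walk:
  assumes "(c', ys) \<in> GT_V r" "c' = c \<or> length ys = r" "j < length ys"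
  obtains p where "GT_walk r p" "hd p = (c', ys)" "last p = (c, take j ys)"
    "length p = Suc (length ys - j)"
proof (cases "c' = c")
  case True
  then show thesis
    using GT_climb_walk[of c ys r j] assms that by auto
next
  case False
  with assms have "length ys = r" "c' = False"
    by auto
  then show thesis
    using GT_leaf_climb_walk[of ys r j c] assms(3) that by auto
qed

section \<open>The leaves form an outer mutual-visibility set\<close>

definition GT_leaves :: "nat \<Rightarrow> (bool \<times> bool list) set" where
  "GT_leaves r = {(False, xs) | xs. length xs = r}"

lemma GT_leaves_subset: "GT_leaves r \<subseteq> GT_V r"
  by (auto simp: GT_leaves_def)

lemma finite_bool_lists: "finite {xs :: bool list. length xs = r}"
  using finite_lists_length_eq[of "UNIV :: bool set" r] by simp

lemma card_bool_lists: "card {xs :: bool list. length xs = r} = 2 ^ r"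
  using card_lists_length_eq[of "UNIV :: bool set" r] by simp

lemma card_GT_leaves: "card (GT_leaves r) = 2 ^ r"
proof -
  have "GT_leaves r = Pair False ` {xs. length xs = r}"
    by (auto simp: GT_leaves_def)
  then show ?thesis
    by (simp add: card_image inj_on_def card_bool_lists)
qed

lemma GT_leaf_geodesic:
  assumes "length us = r" "(c, vs) \<in> GT_V r" "\<not> prefix us vs"
  defines "a \<equiv> longest_common_prefix us vs"
  obtains p where "GT_walk r p" "hd p = (False, us)" "last p = (c, vs)"
    "length p + 2 * length a = r + length vs + 1"
    "\<forall>x \<in> set p. length (snd x) = r \<longrightarrow> x \<in> {(False, us), (c, vs)}"
proof -
  have "prefix a us" "prefix a vs"
    unfolding a_def by (rule longest_common_prefix_prefix1, rule longest_common_prefix_prefix2)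
  then have "take (length a) us = a" "take (length a) vs = a" "length a \<le> length vs"
    by (auto simp: prefix_def)
  have "length a < r"
    unfolding a_def using assms(1,3) longest_common_prefix_length_less by blast
  obtain p1 where p1: "GT_walk r p1" "hd p1 = (False, us)" "last p1 = (c, take (length a) us)"
    "length p1 = Suc (r - length a)" "\<forall>x \<in> set (tl p1). length (snd x) < r"
    by (rule GT_leaf_climb_walk[OF assms(1) \<open>length a < r\<close>])
  obtain p2 where p2: "GT_walk r p2" "hd p2 = (c, vs)" "last p2 = (c, take (length a) vs)"
    "length p2 = Suc (length vs - length a)" "\<forall>x \<in> set (tl p2). length (snd x) < length vs"
    by (rule GT_climb_walk[OF assms(2) \<open>length a \<le> length vs\<close>])
  have "p1 \<noteq> []" "rev p2 \<noteq> []"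
    using walk_nonempty p1(1) p2(1) by auto
  define p where "p = p1 @ tl (rev p2)"
  have "GT_walk r p"
    unfolding p_def using p1(1,3) p2(1,3) \<open>take (length a) us = a\<close> \<open>take (length a) vs = a\<close>
    by (intro walk_join walk_rev) (auto intro: GT_E_sym simp: hd_rev)
  moreover have "hd p = (False, us)" "last p = (c, vs)"
    unfolding p_def using p1 p2 \<open>p1 \<noteq> []\<close> \<open>rev p2 \<noteq> []\<close>
      \<open>take (length a) us = a\<close> \<open>take (length a) vs = a\<close>
    by (simp_all add: last_append_tl hd_rev last_rev)
  moreover have "length p + 2 * length a = r + length vs + 1"
    unfolding p_def using p1(4) p2(4) \<open>length a \<le> length vs\<close> \<open>length a < r\<close> by simp
  moreover have "set p \<subseteq> insert (False, us) (set (tl p1)) \<union> insert (c, vs) (set (tl p2))"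
  proof -
    have "set p \<subseteq> set p1 \<union> set p2"
      unfolding p_def by (auto dest: list.set_sel(2)[OF \<open>rev p2 \<noteq> []\<close>])
    also have "\<dots> = insert (False, us) (set (tl p1)) \<union> insert (c, vs) (set (tl p2))"
      using p1(2) p2(2) \<open>p1 \<noteq> []\<close> \<open>rev p2 \<noteq> []\<close>
      by (metis Nil_is_rev_conv list.collapse list.simps(15))
    finally show ?thesis .
  qed
  then have "\<forall>x \<in> set p. length (snd x) = r \<longrightarrow> x \<in> {(False, us), (c, vs)}"
    using p1(5) p2(5) GT_V_depth_le[OF assms(2)] by fastforce
  ultimately show thesis
    using that by blast
qed

lemma GT_leaf_visible:
  assumes "u \<in> GT_leaves r" "v \<in> GT_V r"
  shows "S_visible (GT_V r) (GT_E r) (GT_leaves r) u v"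
proof -
  obtain us where u: "u = (False, us)" "length us = r"
    using assms(1) by (auto simp: GT_leaves_def)
  obtain c vs where v: "v = (c, vs)"
    by fastforce
  show ?thesis
  proof (cases "prefix us vs")
    case True
    then have "v = u"
      using assms(2) u v by (auto simp: prefix_def)
    then show ?thesis
      using assms GT_leaves_subset
      by (intro S_visibleI[of _ _ "[u]"]) (auto simp: Suc_le_eq dest!: walk_nonempty)
  next
    case False
    define a where "a = longest_common_prefix us vs"
    obtain p where p: "GT_walk r p" "hd p = u" "last p = v"
      "length p + 2 * length a = r + length vs + 1"
      "\<forall>x \<in> set p. length (snd x) = r \<longrightarrow> x \<in> {u, v}"
      using GT_leaf_geodesic[OF u(2) _ False] assms(2) u v unfolding a_def by metis
    have "set p \<inter> GT_leaves r \<subseteq> {u, v}"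
      using p(5) by (auto simp: GT_leaves_def)
    moreover have "length p \<le> length q"
      if "GT_walk r q" "hd q = u" "last q = v" for q
    proof -
      have "r + length vs \<le> 2 * length a + (length q - 1)"
        using GT_walk_length_ge_lcp[OF that(1), of us vs] that(2,3) u v unfolding a_def by simp
      moreover have "0 < length q"
        using walk_nonempty[OF that(1)] by simp
      ultimately show ?thesis
        using p(4) by linarith
    qed
    ultimately show ?thesis
      using p(1-3) by (intro S_visibleI) auto
  qed
qed

lemma GT_leaves_outer_mv: "outer_mutual_visibility_set (GT_V r) (GT_E r) (GT_leaves r)"
  unfolding outer_mutual_visibility_set_def mutual_visibility_set_def
  using GT_leaves_subset GT_leaf_visible by blast

section \<open>Vertices excluded by a vertex of an outer mutual-visibility set\<close>

lemma GT_short_walk_to_parent_visits: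
  assumes "GT_walk r p" "snd (hd p) = ys" "last p = (c, butlast xs)"
    and "strict_prefix xs ys" "xs \<noteq> []" "length xs < r"
    and "length p \<le> length ys - length xs + 2"
  shows "(c, xs) \<in> set p"
proof -
  let ?a = "butlast xs"
  have "prefix xs ys"
    using assms(4) by (simp add: strict_prefix_def)
  with prefixeq_butlast have "prefix ?a ys"
    by (rule prefix_order.trans)
  then have lcp: "longest_common_prefix ys ?a = ?a"
    by (rule longest_common_prefix_eq_right)
  have "length xs < length ys"
    using assms(4) by (rule prefix_length_less)
  then have "\<not> prefix ys ?a"
    using prefix_length_le[of ys ?a] by auto
  have len: "length ?a = length xs - 1" "0 < length xs"
    using assms(5) by simp_all
  define k where "k = length ys - length xs"
  have "2 * length ?a + (length p - 1) \<le> length ys + length ?a"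
    using assms(7) \<open>length xs < length ys\<close> len by linarith
  then have at: "snd (p ! k) = take (length xs) ys"
    using GT_shortest_walk_through_lcp(1)[OF assms(1,2) _ \<open>\<not> prefix ys ?a\<close>] assms(3) lcp len
    unfolding k_def by simp
  have "length ys + length ?a \<le> 2 * length ?a + (length p - 1)"
    using GT_walk_length_ge_lcp[OF assms(1,2), of ?a] assms(3) lcp by simp
  then have "Suc k = length p - 1"
    using assms(7) len \<open>length xs < length ys\<close> unfolding k_def by linarith
  then have "Suc k < length p" "GT_E r (p ! k) (last p)"
    using walk_nth_edge[OF assms(1), of k] walk_last_conv_nth[OF assms(1)] by simp_all
  moreover have "take (length xs) ys = xs"
    using assms(4) by (auto simp: strict_prefix_def prefix_def)
  ultimately have "fst (p ! k) = c"
    using GT_E_same_copy[of r "p ! k" "last p"] at assms(3,6) by simp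
  with at \<open>take (length xs) ys = xs\<close> have "p ! k = (c, xs)"
    by (simp add: prod_eq_iff)
  then show ?thesis
    using \<open>Suc k < length p\<close> by (metis Suc_lessD nth_mem)
qed

lemma GT_short_walk_across_root_visits:
  assumes "GT_walk r p" "snd (hd p) = ys" "last p = (c, [\<not> hd ys])"
    and "ys \<noteq> []" "2 \<le> r" "length p \<le> length ys + 2"
  shows "(c, []) \<in> set p"
proof -
  have lcp: "longest_common_prefix ys [\<not> hd ys] = []"
    using assms(4) by (cases ys) auto
  have "\<not> prefix ys [\<not> hd ys]"
    using assms(4) by (cases ys) auto
  then have at: "snd (p ! length ys) = []"
    using GT_shortest_walk_through_lcp(2)[OF assms(1,2), of "[\<not> hd ys]"] assms(3,6) lcp by simp
  have "length ys + 1 \<le> length p - 1"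
    using GT_walk_length_ge_lcp[OF assms(1,2), of "[\<not> hd ys]"] assms(3) lcp by simp
  then have "Suc (length ys) = length p - 1"
    using assms(6) by linarith
  then have "Suc (length ys) < length p" "GT_E r (p ! length ys) (last p)"
    using walk_nth_edge[OF assms(1), of "length ys"] walk_last_conv_nth[OF assms(1)] by simp_all
  then have "fst (p ! length ys) = c"
    using GT_E_same_copy[of r "p ! length ys" "last p"] at assms(3,5) by simp
  with at have "p ! length ys = (c, [])"
    by (simp add: prod_eq_iff)
  then show ?thesis
    using \<open>Suc (length ys) < length p\<close> by (metis Suc_lessD nth_mem)
qed

lemma GT_outer_mv_no_descendant:
  assumes "2 \<le> r" "outer_mutual_visibility_set (GT_V r) (GT_E r) S" "(c, xs) \<in> S" "length xs < r"
    and "(c', ys) \<in> GT_V r" "strict_prefix xs ys" "c' = c \<or> length ys = r"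
  shows "(c', ys) \<notin> S"
proof
  assume "(c', ys) \<in> S"
  have "length xs < length ys" "take (length xs) ys = xs"
    using assms(6) by (auto simp: prefix_length_less strict_prefix_def prefix_def)
  obtain p0 where p0: "GT_walk r p0" "hd p0 = (c', ys)" "last p0 = (c, take (length xs) ys)"
    "length p0 = Suc (length ys - length xs)"
    by (rule GT_ancestor_walk[OF assms(5,7) \<open>length xs < length ys\<close>])
  txt \<open>A neighbour of \<open>(c, xs)\<close> pointing away from \<open>ys\<close>.\<close>
  define z where "z = (if xs = [] then (c, [\<not> hd ys]) else (c, butlast xs))"
  have "z \<in> GT_V r" "GT_E r (c, xs) z"
    using assms(1,4) unfolding z_def GT_E_def tree_edge_def by auto
  have "snd z \<noteq> xs"
    unfolding z_def by (cases xs rule: rev_cases) auto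
  define q where "q = p0 @ [z]"
  have q: "GT_walk r q" "hd q = (c', ys)" "last q = z" "length q = length ys - length xs + 2"
    unfolding q_def using p0 walk_nonempty[OF p0(1)] \<open>z \<in> GT_V r\<close> \<open>GT_E r (c, xs) z\<close>
      \<open>length xs < length ys\<close> \<open>take (length xs) ys = xs\<close> by (simp_all add: walk_append_iff)
  have passes: "(c, xs) \<in> set p"
    if "GT_walk r p" "hd p = (c', ys)" "last p = z" "length p \<le> length q" for p
  proof (cases "xs = []")
    case True
    then show ?thesis
      using GT_short_walk_across_root_visits[OF that(1)] that(2-4) assms(1,6) q(4)
      unfolding z_def by auto
  next
    case False
    then show ?thesis
      using GT_short_walk_to_parent_visits[OF that(1) _ _ assms(6) False assms(4)] that(2-4) q(4)
      unfolding z_def by auto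
  qed
  have "(c, xs) \<notin> {(c', ys), z}"
    using \<open>length xs < length ys\<close> \<open>snd z \<noteq> xs\<close> by auto
  from outer_mv_visible[OF assms(2) \<open>(c', ys) \<in> S\<close> \<open>z \<in> GT_V r\<close>] assms(3) this q(1-3) passes
  show False
    by (rule S_visible_blocked)
qed

lemma GT_short_walk_across_copies_visits:
  assumes "GT_walk r p" "hd p = (c, xs)" "last p = (\<not> c, butlast ys)"
    and "length xs = r - 1" "2 \<le> r" "prefix ys xs" "ys \<noteq> []"
    and "length p \<le> r - length ys + 3"
  shows "(\<not> c, ys) \<in> set p"
proof -
  have "length ys \<le> r - 1" "0 < length ys"
    using assms(4,6,7) prefix_length_le by fastforce+
  txt \<open>Changing copies needs a leaf; the length bound forces it to be the second vertex, and
    from there on the walk is a shortest climb.\<close>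
  obtain k where k: "k < length p" "length (snd (p ! k)) = r"
    using GT_walk_between_copies_visits_leaf[OF assms(1)] assms(2,3) by auto
  have "k \<noteq> 0"
  proof
    assume "k = 0"
    then have "length xs = r"
      using k(2) assms(2) walk_hd_conv_nth[OF assms(1)] by simp
    then show False
      using assms(4,5) by simp
  qed
  moreover have "length (snd (p ! k)) \<le> length (snd (last p)) + (length p - 1 - k)"
    using GT_walk_depth_lipschitz[OF assms(1), of k "length p - 1"] k(1)
      walk_last_conv_nth[OF assms(1)] by simp
  then have "r \<le> length ys - 1 + (length p - 1 - k)"
    using k(2) assms(3) by simp
  ultimately have "k = 1"
    using assms(8) \<open>length ys \<le> r - 1\<close> \<open>0 < length ys\<close> by linarith
  define l where "l = snd (p ! 1)"
  have "p ! 0 = (c, xs)"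
    using assms(2) walk_hd_conv_nth[OF assms(1)] by simp
  then have "tree_edge xs l"
    using GT_E_tree_edge[OF walk_nth_edge[OF assms(1), of 0]] k \<open>k = 1\<close> unfolding l_def
    by simp
  then have "butlast l = xs" "length l = r"
    using k(2) \<open>k = 1\<close> assms(4,5) unfolding tree_edge_def l_def by auto
  have "length ys < r"
    using \<open>length ys \<le> r - 1\<close> \<open>0 < length ys\<close> by linarith
  have "prefix xs l"
    using prefixeq_butlast[of l] \<open>butlast l = xs\<close> by simp
  with assms(6) have "prefix ys l"
    by (rule prefix_order.trans)
  with \<open>length l = r\<close> \<open>length ys < r\<close> have "strict_prefix ys l"
    by (auto simp: strict_prefix_def)
  have q: "GT_walk r (drop 1 p)" "snd (hd (drop 1 p)) = l" "last (drop 1 p) = (\<not> c, butlast ys)"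
    using walk_drop[OF assms(1), of 1] k(1) \<open>k = 1\<close> assms(3) unfolding l_def
    by (simp_all add: hd_drop_conv_nth)
  have "length (drop 1 p) \<le> length l - length ys + 2"
    using assms(8) \<open>length l = r\<close> by simp
  with \<open>length ys < r\<close> have "(\<not> c, ys) \<in> set (drop 1 p)"
    by (rule GT_short_walk_to_parent_visits[OF q \<open>strict_prefix ys l\<close> assms(7)])
  then show ?thesis
    using set_drop_subset by fast
qed

lemma GT_outer_mv_no_cross_ancestor:
  assumes "2 \<le> r" "outer_mutual_visibility_set (GT_V r) (GT_E r) S" "(c, xs) \<in> S"
    and "length xs = r - 1" "prefix ys xs" "ys \<noteq> []"
  shows "(\<not> c, ys) \<notin> S"
proof
  assume "(\<not> c, ys) \<in> S"
  define z where "z = (\<not> c, butlast ys)"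
  have "length ys \<le> r - 1" "0 < length ys"
    using assms(4-6) prefix_length_le by fastforce+
  then have "length (butlast ys) < r"
    using assms(1) by simp
  then have "z \<in> GT_V r"
    unfolding z_def by simp
  have leaf: "length (xs @ [False]) = r" "length ys - 1 < r"
    using assms(1,4) \<open>length ys \<le> r - 1\<close> by simp_all
  obtain p0 where p0: "GT_walk r p0" "hd p0 = (False, xs @ [False])"
    "last p0 = (\<not> c, take (length ys - 1) (xs @ [False]))" "length p0 = Suc (r - (length ys - 1))"
    by (rule GT_leaf_climb_walk[OF leaf])
  have "take (length ys - 1) (xs @ [False]) = butlast ys"
    using assms(5) \<open>length ys \<le> r - 1\<close> assms(4) by (auto simp: prefix_def butlast_conv_take)
  have "GT_E r (c, xs) (False, xs @ [False])"
    using GT_E_parent[of False xs False r c] assms(1,4) by (simp add: GT_E_sym)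
  define q where "q = (c, xs) # p0"
  have q: "GT_walk r q" "hd q = (c, xs)" "last q = z" "length q = r - length ys + 3"
    unfolding q_def z_def
    using p0 walk_nonempty[OF p0(1)] \<open>GT_E r (c, xs) _\<close> \<open>take (length ys - 1) _ = _\<close>
      \<open>0 < length ys\<close> \<open>length ys \<le> r - 1\<close> assms(1,4)
    by (simp_all add: walk_Cons_iff)
  have "(\<not> c, ys) \<notin> {(c, xs), z}"
    using assms(6) unfolding z_def by (cases ys rule: rev_cases) auto
  moreover have "(\<not> c, ys) \<in> set p"
    if "GT_walk r p" "hd p = (c, xs)" "last p = z" "length p \<le> length q" for p
    using GT_short_walk_across_copies_visits[OF that(1,2) _ assms(4,1,5,6)] that(3,4) q(4)
    unfolding z_def by simp
  ultimately show False
    using S_visible_blocked[OF outer_mv_visible[OF assms(2,3) \<open>z \<in> GT_V r\<close>]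
        \<open>(\<not> c, ys) \<in> S\<close>] q(1-3) by blast
qed

section \<open>Counting via canonical leaves\<close>

definition canonical_leaf :: "nat \<Rightarrow> bool \<times> bool list \<Rightarrow> bool list" where
  "canonical_leaf r v = snd v @ replicate (r - length (snd v)) (fst v)"

lemma length_canonical_leaf: "v \<in> GT_V r \<Longrightarrow> length (canonical_leaf r v) = r"
  using GT_V_depth_le[of v r] by (simp add: canonical_leaf_def)

lemma prefix_canonical_leaf: "prefix (snd v) (canonical_leaf r v)"
  by (simp add: canonical_leaf_def)

lemma nth_canonical_leaf:
  "length (snd v) \<le> i \<Longrightarrow> i < r \<Longrightarrow> canonical_leaf r v ! i = fst v"
  by (simp add: canonical_leaf_def nth_append)

lemma GT_outer_mv_canonical_leaf_depth_le:
  assumes "2 \<le> r" "outer_mutual_visibility_set (GT_V r) (GT_E r) S" "(c, xs) \<in> S" "length xs < r"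
    and "(c', ys) \<in> S" "prefix xs (canonical_leaf r (c', ys))"
    and "\<And>i. length xs < i \<Longrightarrow> i < r \<Longrightarrow> canonical_leaf r (c', ys) ! i = c"
  shows "length ys \<le> length xs"
proof (rule ccontr)
  assume "\<not> length ys \<le> length xs"
  have V: "(c', ys) \<in> GT_V r"
    using assms(5) outer_mv_subset[OF assms(2)] by auto
  have "prefix xs ys"
    using prefix_length_prefix[OF assms(6) prefix_canonical_leaf[of "(c', ys)"]]
      \<open>\<not> length ys \<le> length xs\<close> by simp
  with \<open>\<not> length ys \<le> length xs\<close> have "strict_prefix xs ys"
    by (auto simp: strict_prefix_def)
  moreover have "c' = c \<or> length ys = r"
    using nth_canonical_leaf[of "(c', ys)" "length ys" r] assms(7)[of "length ys"]
      \<open>\<not> length ys \<le> length xs\<close> GT_V_depth_le[OF V] by force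
  ultimately show False
    using GT_outer_mv_no_descendant[OF assms(1-4) V] assms(5) by blast
qed

lemma GT_outer_mv_canonical_leaf_eq:
  assumes "2 \<le> r" "outer_mutual_visibility_set (GT_V r) (GT_E r) S"
    and "(c1, xs1) \<in> S" "(c2, xs2) \<in> S" "length xs1 \<le> length xs2"
    and "canonical_leaf r (c1, xs1) = canonical_leaf r (c2, xs2)"
  shows "(c1, xs1) = (c2, xs2)"
proof -
  have "length xs2 \<le> r"
    using GT_V_depth_le[of "(c2, xs2)" r] assms(4) outer_mv_subset[OF assms(2)] by auto
  show ?thesis
  proof (cases "length xs1 = length xs2")
    case True
    have "prefix xs1 (canonical_leaf r (c2, xs2))"
      using prefix_canonical_leaf[of "(c1, xs1)" r] assms(6) by simp
    with prefix_canonical_leaf[of "(c2, xs2)" r] have "prefix xs1 xs2" "prefix xs2 xs1"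
      using prefix_length_prefix True by (metis order_refl snd_conv)+
    then have "xs1 = xs2"
      by (rule prefix_order.antisym)
    moreover have "c1 = c2"
    proof (cases "length xs2 < r")
      case True
      then show ?thesis
        using nth_canonical_leaf[of "(c1, xs1)" "length xs2" r] assms(5,6)
          nth_canonical_leaf[of "(c2, xs2)" "length xs2" r] by simp
    qed (use assms(3,4) outer_mv_subset[OF assms(2)] \<open>xs1 = xs2\<close> \<open>length xs2 \<le> r\<close> in auto)
    ultimately show ?thesis
      by simp
  next
    case False
    with assms(5) \<open>length xs2 \<le> r\<close> have "length xs1 < r"
      by simp
    have "prefix xs1 (canonical_leaf r (c2, xs2))"
      using prefix_canonical_leaf[of "(c1, xs1)" r] assms(6) by simp
    moreover have "canonical_leaf r (c2, xs2) ! i = c1" if "length xs1 < i" "i < r" for i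
      using nth_canonical_leaf[of "(c1, xs1)" i r] assms(6) that by simp
    ultimately have "length xs2 \<le> length xs1"
      using GT_outer_mv_canonical_leaf_depth_le[OF assms(1-3) \<open>length xs1 < r\<close> assms(4)] by blast
    then show ?thesis
      using False assms(5) by simp
  qed
qed

lemma GT_outer_mv_inj_on_canonical_leaf:
  assumes "2 \<le> r" "outer_mutual_visibility_set (GT_V r) (GT_E r) S"
  shows "inj_on (canonical_leaf r) S"
proof (rule inj_onI)
  fix u v assume "u \<in> S" "v \<in> S" "canonical_leaf r u = canonical_leaf r v"
  then show "u = v"
    using GT_outer_mv_canonical_leaf_eq[OF assms, of "fst u" "snd u" "fst v" "snd v"]
      GT_outer_mv_canonical_leaf_eq[OF assms, of "fst v" "snd v" "fst u" "snd u"]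
    by (cases "length (snd u) \<le> length (snd v)") auto
qed

lemma GT_outer_mv_card_le:
  assumes "2 \<le> r" "outer_mutual_visibility_set (GT_V r) (GT_E r) S"
  shows "card S \<le> 2 ^ r"
proof -
  have "canonical_leaf r ` S \<subseteq> {ls. length ls = r}"
    using length_canonical_leaf outer_mv_subset[OF assms(2)] by blast
  then show ?thesis
    using card_inj_on_le[OF GT_outer_mv_inj_on_canonical_leaf[OF assms]] finite_bool_lists
      card_bool_lists by metis
qed

lemma GT_full_outer_mv_no_shallow_vertex:
  assumes "outer_mutual_visibility_set (GT_V r) (GT_E r) S"
    and "canonical_leaf r ` S = {ls. length ls = r}"
    and "(c, xs) \<in> S" "length xs < r - 1"
  shows False
proof -
  define ls where "ls = xs @ (\<not> c) # replicate (r - length xs - 1) c"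
  have "length ls = r"
    using assms(4) unfolding ls_def by simp
  then have "ls \<in> canonical_leaf r ` S"
    using assms(2) by simp
  then obtain c' ys where "(c', ys) \<in> S" and ls: "canonical_leaf r (c', ys) = ls"
    by force
  have tail: "ls ! i = c" if "length xs < i" "i < r" for i
    using that unfolding ls_def by (simp add: nth_append nth_Cons')
  have "length ys \<le> length xs"
    using GT_outer_mv_canonical_leaf_depth_le[OF _ assms(1,3) _ \<open>(c', ys) \<in> S\<close>] ls tail assms(4)
    unfolding ls_def by simp
  then have "ls ! length xs = c'" "ls ! (r - 1) = c'"
    using nth_canonical_leaf[of "(c', ys)" "length xs" r]
      nth_canonical_leaf[of "(c', ys)" "r - 1" r] ls assms(4) by simp_all
  moreover have "ls ! length xs = (\<not> c)"
    unfolding ls_def by simp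
  ultimately show False
    using tail[of "r - 1"] assms(4) by simp
qed

lemma GT_full_outer_mv_no_penultimate_vertex:
  assumes "2 \<le> r" "outer_mutual_visibility_set (GT_V r) (GT_E r) S"
    and "canonical_leaf r ` S = {ls. length ls = r}"
    and "(c, xs) \<in> S" "length xs = r - 1"
  shows False
proof -
  define ls where "ls = xs @ [\<not> c]"
  have "length ls = r"
    using assms(1,5) unfolding ls_def by simp
  then have "ls \<in> canonical_leaf r ` S"
    using assms(3) by simp
  then obtain c' ys where "(c', ys) \<in> S" and ls: "canonical_leaf r (c', ys) = ls"
    by force
  have "length ys \<le> length xs"
    using GT_outer_mv_canonical_leaf_depth_le[OF assms(1,2,4) _ \<open>(c', ys) \<in> S\<close>] ls assms(1,5)
    unfolding ls_def by simp
  moreover have "length xs < r"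
    using assms(1,5) by simp
  ultimately have "ls ! length xs = c'"
    using nth_canonical_leaf[of "(c', ys)" "length xs" r] ls by simp
  then have "c' = (\<not> c)"
    unfolding ls_def by simp
  have "prefix ys xs"
    using prefix_canonical_leaf[of "(c', ys)" r] ls \<open>length ys \<le> length xs\<close> unfolding ls_def
    by auto
  show False
  proof (cases "ys = []")
    case True
    show False
      by (rule GT_full_outer_mv_no_shallow_vertex[OF assms(2,3), of "\<not> c" "[]"])
        (use True \<open>(c', ys) \<in> S\<close> \<open>c' = (\<not> c)\<close> assms(1) in auto)
  next
    case False
    then show False
      using GT_outer_mv_no_cross_ancestor[OF assms(1,2,4,5) \<open>prefix ys xs\<close>] \<open>(c', ys) \<in> S\<close>
        \<open>c' = (\<not> c)\<close> by simp
  qed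
qed

lemma GT_outer_mv_card_eq_imp_leaves:
  assumes "2 \<le> r" "outer_mutual_visibility_set (GT_V r) (GT_E r) S" "card S = 2 ^ r"
  shows "S = GT_leaves r"
proof -
  have "canonical_leaf r ` S \<subseteq> {ls. length ls = r}"
    using length_canonical_leaf outer_mv_subset[OF assms(2)] by blast
  moreover have "card (canonical_leaf r ` S) = card {ls :: bool list. length ls = r}"
    using card_image[OF GT_outer_mv_inj_on_canonical_leaf[OF assms(1,2)]] assms(3) card_bool_lists
    by simp
  ultimately have surj: "canonical_leaf r ` S = {ls. length ls = r}"
    using card_subset_eq[OF finite_bool_lists] by blast
  have "length xs = r" if "(c, xs) \<in> S" for c xs
  proof -
    have "length xs \<le> r"
      using GT_V_depth_le[of "(c, xs)" r] that outer_mv_subset[OF assms(2)] by auto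
    then consider "length xs < r - 1" | "length xs = r - 1" | "length xs = r"
      by linarith
    then show ?thesis
      using GT_full_outer_mv_no_shallow_vertex[OF assms(2) surj that]
        GT_full_outer_mv_no_penultimate_vertex[OF assms(1,2) surj that] by cases auto
  qed
  then have "S \<subseteq> GT_leaves r"
    using outer_mv_subset[OF assms(2)] by (fastforce simp: GT_leaves_def)
  moreover have "finite (GT_leaves r)"
    using finite_subset[OF GT_leaves_subset finite_GT_V] .
  ultimately show ?thesis
    using card_subset_eq assms(3) card_GT_leaves by metis
qed

theorem mainTheorem4:
  fixes r :: nat
  assumes "r \<ge> 2"
  shows "outer_mv_number (GT_V r) (GT_E r) = 2 ^ r \<and> (\<exists>!S. mu_o_set (GT_V r) (GT_E r) S)"
proof -
  let ?omv = "outer_mutual_visibility_set (GT_V r) (GT_E r)"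
  have "{S. ?omv S} \<subseteq> Pow (GT_V r)"
    using outer_mv_subset by blast
  then have "finite {S. ?omv S}"
    using finite_subset finite_GT_V by blast
  then have number: "outer_mv_number (GT_V r) (GT_E r) = 2 ^ r"
    unfolding outer_mv_number_def
    using GT_outer_mv_card_le[OF assms] GT_leaves_outer_mv card_GT_leaves
    by (intro Max_eqI) (auto intro!: image_eqI[of _ card "GT_leaves r"])
  moreover have "mu_o_set (GT_V r) (GT_E r) S \<longleftrightarrow> S = GT_leaves r" for S
    unfolding mu_o_set_def number
    using GT_outer_mv_card_eq_imp_leaves[OF assms] GT_leaves_outer_mv card_GT_leaves by auto
  ultimately show ?thesis
    by blast
qed

end
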